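(* Let $m\ge2$ be an integer, $0\le\beta<1$ and $t\in\mathbb{C}\setminus\{0,1\}$. The exponential splines satisfy (i) $\Phi_{m-1}(\beta,t)=\dfrac{(-1)^m}{(m-1)!}G_m\!\left(\dfrac1t,\beta\right)$; (ii) $t(m-1)\Phi_{m-1}(\beta,t)=\big(m-1+\beta(t-1)\big)\Phi_{m-2}(\beta,t)+t(1-t)\Phi_{m-2}'(\beta,t)$, where $'$ denotes differentiation with respect to $t$.
   Context: B-splines: $Q_1=\chi_{[0,1)}$, $Q_{m+1}(x)=\int_{-\infty}^\infty Q_m(x-t)Q_1(t)dt$. Exponential spline of degree $m-1$: $\Phi_{m-1}(\beta,t)=\sum_{k\in\mathbb{Z}}t^kQ_m(\beta-k)$. Polynomials $G_m(t,\beta)$ are defined by $G_1(t,\beta)=-1$ and, for $m\ge2$, $G_m(t,\beta)=[\beta(t-1)-(m-1)t]G_{m-1}(t,\beta)+t(t-1)\frac{\partial}{\partial t}G_{m-1}(t,\beta)$. *)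

theory Defs
  imports "HOL-Analysis.Analysis" "HOL-Computational_Algebra.Polynomial"
begin

fun Bspline :: "nat \<Rightarrow> real \<Rightarrow> real" where
  "Bspline 0 x = 0"
| "Bspline (Suc 0) x = indicator {0..<1} x"
| "Bspline (Suc (Suc n)) x =
     integral UNIV (\<lambda>t. Bspline (Suc n) (x - t) * Bspline (Suc 0) t)"

definition expspline :: "nat \<Rightarrow> real \<Rightarrow> complex \<Rightarrow> complex" where
  "expspline n \<beta> t = (\<Sum>\<^sub>\<infinity>k\<in>(UNIV::int set). t powi k * complex_of_real (Bspline (Suc n) (\<beta> - of_int k)))"

fun Gpoly :: "nat \<Rightarrow> real \<Rightarrow> complex poly" where
  "Gpoly 0 \<beta> = 0"
| "Gpoly (Suc 0) \<beta> = [:-1:]"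
| "Gpoly (Suc (Suc n)) \<beta> =
     [: - complex_of_real \<beta>, complex_of_real \<beta> - of_nat (Suc n) :] * Gpoly (Suc n) \<beta>
     + [:0, -1, 1:] * pderiv (Gpoly (Suc n) \<beta>)"

end

theory Submission
  imports Defs
begin

(* Convolving with the indicator of [0,1) integrates over a unit interval, i.e. it takes an
   antiderivative followed by a backward difference.  Hence Q_(n+1) is the (n+1)-fold backward
   difference of the truncated power x_+^n / n!, which gives its support [0, n+1] and the
   recurrence  n Q_(n+1)(x) = x Q_n(x) + (n+1-x) Q_n(x-1).
   For 0 <= beta < 1 the series Phi_n(beta,t) is then the finite sum of Q_(n+1)(beta+j) t^(-j)
   over j <= n, and the recurrence for Q is, coefficientwise, the recurrence defining G: the
   coefficient of s^j in G_(n+1)(s,beta) is (-1)^(n+1) n! Q_(n+1)(beta+j).  This is (i), and (ii)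
   is the recurrence for G read through s = 1/t. *)

definition trunc_pow :: "nat \<Rightarrow> real \<Rightarrow> real" where
  "trunc_pow n y = (if 0 \<le> y then y ^ n else 0)"

definition backward_diff :: "(real \<Rightarrow> real) \<Rightarrow> real \<Rightarrow> real" where
  "backward_diff f x = f x - f (x - 1)"

lemma trunc_pow_Suc_eq_power_max: "trunc_pow (Suc k) y = (max y 0) ^ Suc k"
  by (simp add: trunc_pow_def max_def)

lemma trunc_pow_Suc: "trunc_pow (Suc k) y = y * trunc_pow k y"
  by (simp add: trunc_pow_def)

lemma has_real_derivative_trunc_pow:
  assumes "y \<noteq> 0"
  shows "(trunc_pow (Suc k) has_real_derivative real (Suc k) * trunc_pow k y) (at y)"
proof (cases "y > 0")
  case True
  have "((\<lambda>y. y ^ Suc k) has_real_derivative real (Suc k) * trunc_pow k y) (at y)"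
    using DERIV_pow[of "Suc k" y] True by (simp add: trunc_pow_def)
  then show ?thesis
    by (rule has_field_derivative_transform_within_open[where S="{0<..}"])
      (use True in \<open>auto simp: trunc_pow_def\<close>)
next
  case False
  with assms have "y < 0" by simp
  then have "((\<lambda>y. 0) has_real_derivative real (Suc k) * trunc_pow k y) (at y)"
    by (auto intro!: derivative_eq_intros simp: trunc_pow_def)
  then show ?thesis
    by (rule has_field_derivative_transform_within_open[where S="{..<0}"])
      (use \<open>y < 0\<close> in \<open>auto simp: trunc_pow_def\<close>)
qed

lemma has_integral_trunc_pow:
  "((\<lambda>s. trunc_pow k (a - s)) has_integral backward_diff (trunc_pow (Suc k)) a / real (Suc k)) {0..1}"
proof -
  define F where "F s = - trunc_pow (Suc k) (a - s) / real (Suc k)" for s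
  have "((\<lambda>s. trunc_pow k (a - s)) has_integral (F 1 - F 0)) {0..1}"
  proof (rule fundamental_theorem_of_calculus_interior_strong[where S="{a}"])
    show "continuous_on {0..1} F"
      unfolding F_def trunc_pow_Suc_eq_power_max by (auto intro!: continuous_intros)
    fix x assume "x \<in> {0<..<1} - {a}"
    then have "a - x \<noteq> 0" by auto
    have "((\<lambda>s. trunc_pow (Suc k) (a - s)) has_real_derivative
        real (Suc k) * trunc_pow k (a - x) * (0 - 1)) (at x)"
      by (rule DERIV_chain2[where g="\<lambda>s. a - s", OF has_real_derivative_trunc_pow[OF \<open>a - x \<noteq> 0\<close>]])
        (auto intro!: derivative_eq_intros)
    then have "(F has_real_derivative trunc_pow k (a - x)) (at x)"
      unfolding F_def by (auto intro!: derivative_eq_intros)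
    then show "(F has_vector_derivative trunc_pow k (a - x)) (at x)"
      by (simp add: has_real_derivative_iff_has_vector_derivative)
  qed auto
  moreover have "F 1 - F 0 = backward_diff (trunc_pow (Suc k)) a / real (Suc k)"
    unfolding F_def backward_diff_def by (simp add: diff_divide_distrib)
  ultimately show ?thesis by simp
qed

lemma backward_diff_funpow_Suc:
  "(backward_diff ^^ Suc n) f x = (backward_diff ^^ n) f x - (backward_diff ^^ n) f (x - 1)"
  by (simp add: backward_diff_def)

lemma has_integral_backward_diff_funpow:
  assumes "\<And>a. ((\<lambda>s. g (a - s)) has_integral H a) S"
  shows "((\<lambda>s. (backward_diff ^^ n) g (a - s)) has_integral (backward_diff ^^ n) H a) S"
proof (induction n arbitrary: a)
  case 0
  then show ?case using assms by simp
next
  case (Suc n)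
  have "((\<lambda>s. (backward_diff ^^ n) g (a - s) - (backward_diff ^^ n) g ((a - 1) - s)) has_integral
      (backward_diff ^^ n) H a - (backward_diff ^^ n) H (a - 1)) S"
    by (intro has_integral_diff Suc)
  then show ?case
    unfolding backward_diff_funpow_Suc by (simp add: algebra_simps)
qed

lemma backward_diff_funpow_divide:
  "(backward_diff ^^ n) (\<lambda>a. f a / c) = (\<lambda>a. (backward_diff ^^ n) f a / c)"
  by (induction n) (auto simp: backward_diff_def fun_eq_iff diff_divide_distrib)

lemma backward_diff_funpow_mult_id:
  "(backward_diff ^^ m) (\<lambda>y. y * f y) x
     = x * (backward_diff ^^ m) f x + real m * (backward_diff ^^ (m - 1)) f (x - 1)"
proof (induction m arbitrary: x)
  case 0
  then show ?case by simp
next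
  case (Suc m)
  show ?case
  proof (cases m)
    case 0
    then show ?thesis by (simp add: backward_diff_def algebra_simps)
  next
    case (Suc k)
    then have "(backward_diff ^^ m) f (x - 1)
        = (backward_diff ^^ k) f (x - 1) - (backward_diff ^^ k) f (x - 1 - 1)"
      using backward_diff_funpow_Suc by simp
    with Suc show ?thesis
      unfolding backward_diff_funpow_Suc[of m] Suc.IH
      by (simp del: funpow.simps add: backward_diff_funpow_Suc algebra_simps)
  qed
qed

lemma backward_diff_funpow_eq_0:
  assumes "\<And>y. y \<le> x \<Longrightarrow> f y = 0"
  shows "(backward_diff ^^ m) f x = 0"
  using assms
proof (induction m arbitrary: x)
  case 0
  then show ?case by simp
next
  case (Suc m)
  then show ?case unfolding backward_diff_funpow_Suc by simp
qed

lemma has_integral_backward_diff_trunc_pow: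
  "((\<lambda>s. (backward_diff ^^ Suc n) (trunc_pow n) (x - s) / fact n) has_integral
     (backward_diff ^^ Suc (Suc n)) (trunc_pow (Suc n)) x / fact (Suc n)) {0..1}"
proof -
  have "((\<lambda>s. (backward_diff ^^ Suc n) (trunc_pow n) (x - s)) has_integral
      (backward_diff ^^ Suc n) (\<lambda>a. backward_diff (trunc_pow (Suc n)) a / real (Suc n)) x) {0..1}"
    by (rule has_integral_backward_diff_funpow) (rule has_integral_trunc_pow)
  also have "(backward_diff ^^ Suc n) (\<lambda>a. backward_diff (trunc_pow (Suc n)) a / real (Suc n)) x
      = (backward_diff ^^ Suc (Suc n)) (trunc_pow (Suc n)) x / real (Suc n)"
    unfolding backward_diff_funpow_divide by (simp only: funpow_Suc_right o_def)
  finally show ?thesis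
    by (rule has_integral_divide[THEN has_integral_eq_rhs]) (simp add: field_simps)
qed

lemma Bspline_eq_backward_diff:
  "Bspline (Suc n) x = (backward_diff ^^ Suc n) (trunc_pow n) x / fact n"
proof (induction n arbitrary: x)
  case 0
  show ?case by (simp add: backward_diff_def trunc_pow_def split: split_indicator)
next
  case (Suc n)
  let ?Q = "(backward_diff ^^ Suc (Suc n)) (trunc_pow (Suc n)) x / fact (Suc n)"
  have "((\<lambda>s. if s \<in> {0..1} then Bspline (Suc n) (x - s) else 0) has_integral ?Q) UNIV"
    unfolding has_integral_restrict_UNIV Suc.IH by (rule has_integral_backward_diff_trunc_pow)
  then have "((\<lambda>s. Bspline (Suc n) (x - s) * Bspline (Suc 0) s) has_integral ?Q) UNIV"
    by (rule has_integral_spike[where S="{1}", rotated 2]) (auto split: split_indicator)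
  then show ?case by (simp add: integral_unique)
qed

lemma Bspline_has_integral:
  "((\<lambda>s. Bspline (Suc n) (x - s)) has_integral Bspline (Suc (Suc n)) x) {0..1}"
  unfolding Bspline_eq_backward_diff by (rule has_integral_backward_diff_trunc_pow)

lemma Bspline_eq_0_neg:
  assumes "x < 0"
  shows "Bspline n x = 0"
proof (cases n)
  case (Suc k)
  have "(backward_diff ^^ Suc k) (trunc_pow k) x = 0"
    by (rule backward_diff_funpow_eq_0) (use assms in \<open>simp add: trunc_pow_def\<close>)
  with Suc show ?thesis by (simp only: Bspline_eq_backward_diff)
qed simp

lemma Bspline_eq_0_ge: "real n \<le> x \<Longrightarrow> Bspline n x = 0"
proof (induction n arbitrary: x)
  case 0
  then show ?case by simp
next
  case (Suc n)
  show ?case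
  proof (cases n)
    case 0
    with Suc.prems show ?thesis by simp
  next
    fix k assume n: "n = Suc k"
    have "((\<lambda>s. Bspline n (x - s)) has_integral 0) {0..1}"
      by (rule has_integral_spike[where S="{}", OF _ _ has_integral_0]) (use Suc in auto)
    with Bspline_has_integral[of k x] n show ?thesis
      using has_integral_unique by blast
  qed
qed

lemma Bspline_recurrence:
  "real n * Bspline (Suc n) x = x * Bspline n x + (real n + 1 - x) * Bspline n (x - 1)"
proof (cases n)
  case (Suc k)
  define A where "A = (backward_diff ^^ Suc k) (trunc_pow k)"
  define B where "B = (backward_diff ^^ Suc (Suc k)) (trunc_pow (Suc k)) x"
  have "B = x * (backward_diff ^^ Suc (Suc k)) (trunc_pow k) x + real (Suc (Suc k)) * A (x - 1)"
    unfolding B_def trunc_pow_Suc[abs_def] A_def by (subst backward_diff_funpow_mult_id) simp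
  also have "(backward_diff ^^ Suc (Suc k)) (trunc_pow k) x = A x - A (x - 1)"
    unfolding A_def by (rule backward_diff_funpow_Suc)
  finally have B_eq: "B = x * A x + (real k + 2 - x) * A (x - 1)"
    by (simp add: algebra_simps)
  have "real n * Bspline (Suc n) x = real (Suc k) * (B / fact (Suc k))"
    unfolding Suc B_def Bspline_eq_backward_diff ..
  also have "\<dots> = (x * A x + (real k + 2 - x) * A (x - 1)) / fact k"
    by (simp add: B_eq)
  also have "\<dots> = x * Bspline n x + (real n + 1 - x) * Bspline n (x - 1)"
    unfolding Suc Bspline_eq_backward_diff A_def by (simp add: add_divide_distrib)
  finally show ?thesis .
qed simp

lemma coeff_linear_mult_plus_pderiv_0:
  fixes a b :: "'a::idom"
  shows "coeff ([:a, b:] * p + [:0, -1, 1:] * pderiv p) 0 = a * coeff p 0"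
  by (simp add: mult_pCons_left)

lemma coeff_linear_mult_plus_pderiv_Suc:
  fixes a b :: "'a::idom"
  shows "coeff ([:a, b:] * p + [:0, -1, 1:] * pderiv p) (Suc j) =
    (a - of_nat (Suc j)) * coeff p (Suc j) + (b + of_nat j) * coeff p j"
  by (cases j) (auto simp: coeff_pderiv mult_pCons_left coeff_pCons algebra_simps)

lemma coeff_Gpoly:
  assumes "0 \<le> \<beta>" "\<beta> < 1"
  shows "coeff (Gpoly (Suc n) \<beta>) j = of_real ((-1) ^ Suc n * fact n * Bspline (Suc n) (\<beta> + real j))"
proof (induction n arbitrary: j)
  case 0
  then show ?case using assms by (cases j) (auto split: split_indicator)
next
  case (Suc n)
  define c :: real where "c = (-1) ^ Suc n * fact n"
  have IH: "coeff (Gpoly (Suc n) \<beta>) i = of_real (c * Bspline (Suc n) (\<beta> + real i))" for i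
    unfolding c_def by (rule Suc.IH)
  have "(-1) ^ Suc (Suc n) * fact (Suc n) * Bspline (Suc (Suc n)) (\<beta> + real j)
      = - c * (real (Suc n) * Bspline (Suc (Suc n)) (\<beta> + real j))"
    by (simp add: c_def)
  also have "\<dots> = - c * ((\<beta> + real j) * Bspline (Suc n) (\<beta> + real j)
      + (real n + 2 - (\<beta> + real j)) * Bspline (Suc n) (\<beta> + real j - 1))"
    using Bspline_recurrence[of "Suc n"] by simp
  finally have rec: "(-1) ^ Suc (Suc n) * fact (Suc n) * Bspline (Suc (Suc n)) (\<beta> + real j) = \<dots>" .
  show ?case
  proof (cases j)
    case 0
    have "Bspline (Suc n) (\<beta> - 1) = 0" using assms by (intro Bspline_eq_0_neg) simp
    with 0 show ?thesis
      unfolding rec Gpoly.simps(3) coeff_linear_mult_plus_pderiv_0 by (simp add: IH)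
  next
    case (Suc i)
    then show ?thesis
      unfolding rec unfolding Suc Gpoly.simps(3) coeff_linear_mult_plus_pderiv_Suc
      by (simp add: IH algebra_simps)
  qed
qed

lemma poly_Gpoly_eq_sum:
  assumes "0 \<le> \<beta>" "\<beta> < 1"
  shows "poly (Gpoly (Suc n) \<beta>) s = (\<Sum>j\<le>n. coeff (Gpoly (Suc n) \<beta>) j * s ^ j)"
proof -
  have coeff_eq_0: "coeff (Gpoly (Suc n) \<beta>) j = 0" if "j > n" for j
    using that assms by (simp add: coeff_Gpoly Bspline_eq_0_ge)
  then have "degree (Gpoly (Suc n) \<beta>) \<le> n"
    by (intro degree_le) auto
  with coeff_eq_0 show ?thesis
    unfolding poly_altdef by (intro sum.mono_neutral_left) (auto intro: le_degree)
qed

lemma expspline_eq_sum: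
  assumes "0 \<le> \<beta>" "\<beta> < 1"
  shows "expspline n \<beta> t = (\<Sum>j\<le>n. (1 / t) ^ j * of_real (Bspline (Suc n) (\<beta> + real j)))"
proof -
  define f where "f k = t powi k * of_real (Bspline (Suc n) (\<beta> - of_int k))" for k
  define S where "S = (\<lambda>j. - int j) ` {..n}"
  have "expspline n \<beta> t = infsum f UNIV"
    unfolding expspline_def f_def ..
  also have "\<dots> = infsum f S"
  proof (rule infsum_cong_neutral)
    fix k assume "k \<in> UNIV - S"
    have "k > 0 \<or> k < - int n"
    proof (rule ccontr)
      assume "\<not> (k > 0 \<or> k < - int n)"
      then have "k = - int (nat (- k))" "nat (- k) \<in> {..n}" by auto
      with \<open>k \<in> UNIV - S\<close> show False unfolding S_def by blast
    qed
    with assms have "\<beta> - of_int k < 0 \<or> real (Suc n) \<le> \<beta> - of_int k" by linarith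
    then show "f k = 0"
      unfolding f_def using Bspline_eq_0_neg Bspline_eq_0_ge by auto
  qed auto
  also have "\<dots> = (\<Sum>j\<le>n. f (- int j))"
    unfolding S_def by (simp add: sum.reindex inj_on_def)
  also have "\<dots> = (\<Sum>j\<le>n. (1 / t) ^ j * of_real (Bspline (Suc n) (\<beta> + real j)))"
    unfolding f_def by (simp add: power_int_minus power_one_over field_simps)
  finally show ?thesis .
qed

lemma expspline_eq_Gpoly:
  assumes "0 \<le> \<beta>" "\<beta> < 1"
  shows "expspline n \<beta> t = (-1) ^ Suc n / fact n * poly (Gpoly (Suc n) \<beta>) (1 / t)"
proof -
  have "(-1) ^ Suc n / fact n * ((-1) ^ Suc n * fact n * z) = (z :: complex)" for z
    by (simp flip: power_mult_distrib)
  then show ?thesis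
    unfolding expspline_eq_sum[OF assms] poly_Gpoly_eq_sum[OF assms] coeff_Gpoly[OF assms]
      sum_distrib_left
    by (simp add: mult.commute mult.left_commute)
qed

lemma expspline_recurrence:
  assumes "0 \<le> \<beta>" "\<beta> < 1" "t \<noteq> 0"
  shows "t * of_nat (Suc n) * expspline (Suc n) \<beta> t =
           (of_nat (Suc n) + of_real \<beta> * (t - 1)) * expspline n \<beta> t
           + t * (1 - t) * deriv (expspline n \<beta>) t"
proof -
  define c :: complex where "c = (-1) ^ Suc n / fact n"
  define G where "G = Gpoly (Suc n) \<beta>"
  have Phi: "expspline n \<beta> = (\<lambda>u. c * poly G (1 / u))"
    unfolding c_def G_def by (rule ext) (rule expspline_eq_Gpoly[OF assms(1,2)])
  have "((\<lambda>u. poly G (1 / u)) has_field_derivative poly (pderiv G) (1 / t) * (- 1 / t\<^sup>2)) (at t)"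
    by (rule DERIV_chain2[OF poly_DERIV])
      (use assms(3) in \<open>auto intro!: derivative_eq_intros simp: power2_eq_square field_simps\<close>)
  then have Phi_deriv: "deriv (expspline n \<beta>) t = c * (poly (pderiv G) (1 / t) * (- 1 / t\<^sup>2))"
    unfolding Phi by (intro DERIV_imp_deriv DERIV_cmult)
  have c_Suc: "(-1) ^ Suc (Suc n) / fact (Suc n) * of_nat (Suc n) = - c"
    unfolding c_def fact_Suc[of n] of_nat_mult by (simp add: divide_simps del: of_nat_Suc)
  have "of_nat (Suc n) * expspline (Suc n) \<beta> t
      = ((-1) ^ Suc (Suc n) / fact (Suc n) * of_nat (Suc n)) * poly (Gpoly (Suc (Suc n)) \<beta>) (1 / t)"
    unfolding expspline_eq_Gpoly[OF assms(1,2)] by (simp only: mult_ac)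
  then have Phi_Suc: "of_nat (Suc n) * expspline (Suc n) \<beta> t = - c * poly (Gpoly (Suc (Suc n)) \<beta>) (1 / t)"
    unfolding c_Suc .
  have G_Suc: "poly (Gpoly (Suc (Suc n)) \<beta>) s
      = (s * (of_real \<beta> - of_nat (Suc n)) - of_real \<beta>) * poly G s + s * (s - 1) * poly (pderiv G) s" for s
    unfolding G_def by (simp add: algebra_simps)
  show ?thesis
    unfolding mult.assoc[of t] Phi_Suc G_Suc Phi_deriv unfolding Phi
    using assms(3) by (simp add: field_simps power2_eq_square)
qed

theorem theorem4p5:
  fixes m :: nat and \<beta> :: real and t :: complex
  assumes "2 \<le> m" and "0 \<le> \<beta>" and "\<beta> < 1" and "t \<noteq> 0" and "t \<noteq> 1"
  shows "expspline (m - 1) \<beta> t = (-1) ^ m / of_nat (fact (m - 1)) * poly (Gpoly m \<beta>) (1 / t)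
    \<and> t * of_nat (m - 1) * expspline (m - 1) \<beta> t =
           (of_nat (m - 1) + complex_of_real \<beta> * (t - 1)) * expspline (m - 2) \<beta> t
           + t * (1 - t) * deriv (expspline (m - 2) \<beta>) t"
proof -
  obtain n where m: "m = Suc (Suc n)"
    using \<open>2 \<le> m\<close> by (metis add_2_eq_Suc le_Suc_ex)
  then have "m - 1 = Suc n" "m - 2 = n"
    by simp_all
  with m show ?thesis
    using expspline_eq_Gpoly[OF assms(2,3)] expspline_recurrence[OF assms(2-4)]
    by (simp only: of_nat_fact)
qed

end
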